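(* Let $g\in\mathcal{G}$ be an $\mathbb{S}$-nearly periodic function that is bounded above by a sub-polynomial function. Then there exist $\alpha>0$ and an increasing sequence $(y_k)$ of positive integers such that $g(y_k)\le y_k^{-\alpha}$ for all $k$ and, for every $x\in\mathbb{N}$, $\lim_{k\to\infty} g(x+y_k)=g(x)$.
   Context: $\mathcal{G}=\{g:\mathbb{Z}_{\ge0}\to\mathbb{R}: g(0)=0,\ g(1)=1,\ g(x)>0\ \forall x>0\}$. A function $f:\mathbb{R}_{\ge0}\to\mathbb{R}_{\ge0}$ is sub-polynomial if for every $\alpha>0$, $\lim_{x\to\infty}x^\alpha f(x)=\infty$ and $\lim_{x\to\infty}x^{-\alpha}f(x)=0$. For a set $\mathcal{S}$ of functions, $g$ is $\mathcal{S}$-nearly periodic if (1) there is $\alpha>0$ such that for every $N>0$ there exist $x,y\in\mathbb{N}$, $x<y$, $y\ge N$ with $g(y)\le g(x)/y^\alpha$ (such $y$ is called an $\alpha$-period of $g$); and (2) for every $\alpha>0$ and every $h\in\mathcal{S}$ there is $N_1>0$ such that for all $\alpha$-periods $y\ge N_1$ and all $x<y$ with $g(y)y^\alpha\le g(x)$, $|g(x+y)-g(x)|\le \min\{g(x),g(x+y)\}h(y)$. $\mathbb{S}$ denotes the set of non-increasing sub-polynomial functions on $\mathbb{Z}_{\ge0}$. *)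

theory Defs
  imports "HOL-Analysis.Analysis"
begin

definition in_G :: "(nat \<Rightarrow> real) \<Rightarrow> bool" where
  "in_G g \<longleftrightarrow> g 0 = 0 \<and> g 1 = 1 \<and> (\<forall>x>0. g x > 0)"

definition sub_polynomial :: "(real \<Rightarrow> real) \<Rightarrow> bool" where
  "sub_polynomial f \<longleftrightarrow> (\<forall>x\<ge>0. f x \<ge> 0) \<and>
     (\<forall>\<alpha>>0. filterlim (\<lambda>x. x powr \<alpha> * f x) at_top at_top \<and>
             ((\<lambda>x. x powr (-\<alpha>) * f x) \<longlongrightarrow> 0) at_top)"

definition sub_polynomial_nat :: "(nat \<Rightarrow> real) \<Rightarrow> bool" where
  "sub_polynomial_nat f \<longleftrightarrow> (\<forall>x. f x \<ge> 0) \<and>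
     (\<forall>\<alpha>>0. filterlim (\<lambda>x. real x powr \<alpha> * f x) at_top sequentially \<and>
             (\<lambda>x. real x powr (-\<alpha>) * f x) \<longlonglongrightarrow> 0)"

definition SS :: "(nat \<Rightarrow> real) set" where
  "SS = {h. antimono h \<and> sub_polynomial_nat h}"

definition alpha_period :: "(nat \<Rightarrow> real) \<Rightarrow> real \<Rightarrow> nat \<Rightarrow> bool" where
  "alpha_period g \<alpha> y \<longleftrightarrow> (\<exists>x<y. g y \<le> g x / real y powr \<alpha>)"

definition nearly_periodic :: "(nat \<Rightarrow> real) set \<Rightarrow> (nat \<Rightarrow> real) \<Rightarrow> bool" where
  "nearly_periodic S g \<longleftrightarrow>
     (\<exists>\<alpha>>0. \<forall>N>0. \<exists>x y. x < y \<and> y \<ge> N \<and> g y \<le> g x / real y powr \<alpha>) \<and>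
     (\<forall>\<alpha>>0. \<forall>h\<in>S. \<exists>N1>0. \<forall>y x. alpha_period g \<alpha> y \<and> y \<ge> N1 \<and> x < y \<and>
         g y * real y powr \<alpha> \<le> g x \<longrightarrow>
         \<bar>g (x + y) - g x\<bar> \<le> min (g x) (g (x + y)) * h y)"

end

theory Submission
  imports Defs "HOL-Real_Asymp.Real_Asymp"
begin

text \<open>
  A sub-polynomial upper bound gives g(x) \<le> y^(\<alpha>/2) for all x < y once y is large, so every
  large \<alpha>-period y, witnessed by some x < y with g(y) \<le> g(x)/y^\<alpha>, satisfies g(y) \<le> y^(-\<alpha>/2).
  Along such periods y_k we get g(y_k) y_k^(\<alpha>/4) \<rightarrow> 0, so for every fixed x with g(x) > 0
  condition (2) of near periodicity eventually applies with exponent \<alpha>/4, and with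
  h(n) = 1/ln(n+2) it yields |g(x + y_k) - g(x)| \<le> g(x) h(y_k) \<rightarrow> 0. For x = 0 the claim
  is just g(y_k) \<rightarrow> 0.
\<close>

lemma inverse_ln_in_SS: "(\<lambda>n::nat. 1 / ln (real n + 2)) \<in> SS"
proof -
  have "antimono (\<lambda>n::nat. 1 / ln (real n + 2))"
    by (intro antimonoI divide_left_mono) (auto intro!: mult_pos_pos)
  moreover have "filterlim (\<lambda>x. real x powr a * (1 / ln (real x + 2))) at_top sequentially
     \<and> (\<lambda>x. real x powr (-a) * (1 / ln (real x + 2))) \<longlonglongrightarrow> 0" if "a > 0" for a
    using that by (intro conjI; real_asymp)
  ultimately show ?thesis unfolding SS_def sub_polynomial_nat_def by auto
qed

lemma sub_polynomial_eventually_le_powr: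
  assumes "sub_polynomial f" and "e > 0"
  shows "\<forall>\<^sub>F x in at_top. f x < x powr e"
proof -
  have "((\<lambda>x. x powr (-e) * f x) \<longlongrightarrow> 0) at_top"
    using assms unfolding sub_polynomial_def by auto
  then have "\<forall>\<^sub>F x in at_top. x powr (-e) * f x < 1"
    by (rule order_tendstoD) simp
  moreover have "\<forall>\<^sub>F x::real in at_top. x > 0"
    by (rule eventually_gt_at_top)
  ultimately show ?thesis
    by eventually_elim (simp add: powr_minus field_simps)
qed

lemma sub_polynomially_bounded_le_powr:
  fixes g :: "nat \<Rightarrow> real"
  assumes "sub_polynomial f" and "\<forall>n. g n \<le> f (real n)" and "e > 0"
  obtains N where "\<And>x y. x \<le> y \<Longrightarrow> N \<le> y \<Longrightarrow> g x \<le> real y powr e"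
proof -
  obtain M where M: "\<And>x. x \<ge> M \<Longrightarrow> f x < x powr (e/2)"
    using sub_polynomial_eventually_le_powr[OF assms(1), of "e/2"] assms(3)
    by (auto simp: eventually_at_top_linorder)
  define C where "C = Max (g ` {..nat \<lceil>M\<rceil>})"
  have g_le: "g n \<le> max C (real n powr (e/2))" for n
  proof (cases "n \<le> nat \<lceil>M\<rceil>")
    case True
    then show ?thesis unfolding C_def by (simp add: Max_ge le_max_iff_disj)
  next
    case False
    then have "f (real n) < real n powr (e/2)" by (intro M) linarith
    then have "g n \<le> real n powr (e/2)"
      using assms(2)[rule_format, of n] by linarith
    then show ?thesis by simp
  qed
  have "\<forall>\<^sub>F n in sequentially. C \<le> real n powr e \<and> 1 \<le> n"
    using assms(3) by (intro eventually_conj; real_asymp)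
  then obtain N where N: "\<And>n. n \<ge> N \<Longrightarrow> C \<le> real n powr e \<and> 1 \<le> n"
    by (auto simp: eventually_sequentially)
  show ?thesis
  proof
    fix x y :: nat
    assume "x \<le> y" "N \<le> y"
    then have y: "real y \<ge> 1" "C \<le> real y powr e" using N by auto
    have "g x \<le> max C (real x powr (e/2))" by (rule g_le)
    also have "\<dots> \<le> max C (real y powr (e/2))"
      using \<open>x \<le> y\<close> assms(3) by (intro max.mono powr_mono2) auto
    also have "\<dots> \<le> real y powr e"
      using y assms(3) by (auto intro: powr_mono)
    finally show "g x \<le> real y powr e" .
  qed
qed

lemma alpha_period_antimono:
  assumes "alpha_period g \<alpha> y" and "\<beta> \<le> \<alpha>" and "\<forall>x. g x \<ge> 0"
  shows "alpha_period g \<beta> y"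
proof -
  obtain x where x: "x < y" "g y \<le> g x / real y powr \<alpha>"
    using assms(1) unfolding alpha_period_def by blast
  then have "real y powr \<beta> \<le> real y powr \<alpha>"
    using assms(2) by (intro powr_mono) auto
  then have "g x / real y powr \<alpha> \<le> g x / real y powr \<beta>"
    using assms(3) x(1) by (intro divide_left_mono) auto
  then show ?thesis using x unfolding alpha_period_def by force
qed

lemma unbounded_imp_strict_mono_enumeration:
  assumes "\<And>N. \<exists>n\<ge>N. P n"
  obtains r :: "nat \<Rightarrow> nat" where "strict_mono r" and "\<And>k. P (r k)"
proof
  have "infinite {n. P n}"
    using assms by (simp add: infinite_nat_iff_unbounded_le)
  then show "strict_mono (enumerate {n. P n})" and "P (enumerate {n. P n} k)" for k
    using strict_mono_enumerate enumerate_in_set by blast+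
qed

lemma decaying_periods:
  fixes g :: "nat \<Rightarrow> real"
  assumes "nearly_periodic SS g" and "sub_polynomial f" and "\<forall>n. g n \<le> f (real n)"
  obtains a where "a > 0"
    and "\<And>N. \<exists>y\<ge>N. y > 0 \<and> alpha_period g (2 * a) y \<and> g y \<le> real y powr (-a)"
proof -
  obtain a where a: "a > 0"
    and periods: "\<And>N. N > 0 \<Longrightarrow> \<exists>x y. x < y \<and> y \<ge> N \<and> g y \<le> g x / real y powr (2 * a)"
    using assms(1) unfolding nearly_periodic_def
    by (metis field_sum_of_halves half_gt_zero mult_2)
  obtain N0 where N0: "\<And>x y. x \<le> y \<Longrightarrow> N0 \<le> y \<Longrightarrow> g x \<le> real y powr a"
    using sub_polynomially_bounded_le_powr[OF assms(2,3) a] by blast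
  have "\<exists>y\<ge>N. y > 0 \<and> alpha_period g (2 * a) y \<and> g y \<le> real y powr (-a)" for N
  proof -
    have "max N (max N0 1) > 0" by simp
    then obtain x y where "x < y" "y \<ge> max N (max N0 1)"
      and gy: "g y \<le> g x / real y powr (2 * a)"
      using periods by blast
    then have xy: "x < y" "y \<ge> N" "y \<ge> N0" "y \<ge> 1" by auto
    have y1: "real y \<ge> 1" using xy by simp
    note gy
    also have "g x / real y powr (2 * a) \<le> real y powr a / real y powr (2 * a)"
      using N0[of x y] xy by (intro divide_right_mono) auto
    also have "\<dots> = real y powr (-a)"
      using y1 by (simp add: powr_diff[symmetric])
    finally show ?thesis
      using xy gy unfolding alpha_period_def by auto
  qed
  with a show ?thesis using that by blast
qed

lemma powr_decay_along_seq:
  fixes y :: "nat \<Rightarrow> nat"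
  assumes "strict_mono y" and "\<And>k. 0 \<le> u k" and "\<And>k. u k \<le> real (y k) powr (-a)"
    and "b < a"
  shows "(\<lambda>k. u k * real (y k) powr b) \<longlonglongrightarrow> 0"
proof (rule tendsto_sandwich[where f = "\<lambda>_. 0"])
  show "(\<lambda>k. real (y k) powr (-a + b)) \<longlonglongrightarrow> 0"
    using assms(4) filterlim_compose[OF filterlim_real_sequentially filterlim_subseq[OF assms(1)]]
    by (intro tendsto_neg_powr) auto
  show "\<forall>\<^sub>F k in sequentially. 0 \<le> u k * real (y k) powr b"
    using assms(2) by simp
  have "u k * real (y k) powr b \<le> real (y k) powr (-a + b)" for k
  proof -
    have "u k * real (y k) powr b \<le> real (y k) powr (-a) * real (y k) powr b"
      using assms(3) by (rule mult_right_mono) simp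
    also have "\<dots> = real (y k) powr (-a + b)"
      by (rule powr_add[symmetric])
    finally show ?thesis .
  qed
  then show "\<forall>\<^sub>F k in sequentially. u k * real (y k) powr b \<le> real (y k) powr (-a + b)"
    by simp
qed simp

lemma nearly_periodic_tendsto_shift:
  fixes g :: "nat \<Rightarrow> real" and y :: "nat \<Rightarrow> nat"
  assumes "nearly_periodic SS g" and "\<beta> > 0" and "strict_mono y"
    and "\<And>k. alpha_period g \<beta> (y k)"
    and "(\<lambda>k. g (y k) * real (y k) powr \<beta>) \<longlonglongrightarrow> 0"
    and "g x > 0"
  shows "(\<lambda>k. g (x + y k)) \<longlonglongrightarrow> g x"
proof -
  define h where "h = (\<lambda>n::nat. 1 / ln (real n + 2))"
  obtain N1 where N1: "\<And>y x. alpha_period g \<beta> y \<Longrightarrow> y \<ge> N1 \<Longrightarrow> x < y \<Longrightarrow>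
      g y * real y powr \<beta> \<le> g x \<Longrightarrow> \<bar>g (x + y) - g x\<bar> \<le> min (g x) (g (x + y)) * h y"
    using conjunct2[OF assms(1)[unfolded nearly_periodic_def], rule_format, OF assms(2) inverse_ln_in_SS]
    unfolding h_def by blast
  have y: "filterlim y at_top sequentially"
    using assms(3) by (rule filterlim_subseq)
  have "\<forall>\<^sub>F k in sequentially. g (y k) * real (y k) powr \<beta> < g x"
    using assms(5,6) by (rule order_tendstoD)
  moreover have "\<forall>\<^sub>F k in sequentially. y k \<ge> max N1 (x + 1)"
    using y unfolding filterlim_at_top by (simp del: max_def max.bounded_iff)
  ultimately have "\<forall>\<^sub>F k in sequentially. norm (g (x + y k) - g x) \<le> g x * h (y k)"
  proof eventually_elim
    case (elim k)
    then have "\<bar>g (x + y k) - g x\<bar> \<le> min (g x) (g (x + y k)) * h (y k)"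
      by (intro N1 assms(4)) auto
    also have "\<dots> \<le> g x * h (y k)"
      by (intro mult_right_mono) (auto simp: h_def)
    finally show ?case by simp
  qed
  moreover have "(\<lambda>k. h (y k)) \<longlonglongrightarrow> 0"
    unfolding h_def by (rule filterlim_compose[OF _ y]) real_asymp
  then have "(\<lambda>k. g x * h (y k)) \<longlonglongrightarrow> 0"
    by (rule tendsto_mult_right_zero)
  ultimately have "(\<lambda>k. g (x + y k) - g x) \<longlonglongrightarrow> 0"
    by (rule Lim_null_comparison)
  then show ?thesis by (simp add: LIM_zero_cancel)
qed

lemma in_G_tendsto_shift_along_decaying_periods:
  fixes g :: "nat \<Rightarrow> real" and y :: "nat \<Rightarrow> nat"
  assumes "in_G g" and "nearly_periodic SS g" and "a > 0" and "strict_mono y"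
    and "\<And>k. y k > 0" and "\<And>k. alpha_period g (2 * a) (y k)"
    and "\<And>k. g (y k) \<le> real (y k) powr (-a)"
  shows "(\<lambda>k. g (x + y k)) \<longlonglongrightarrow> g x"
proof -
  have g0: "g 0 = 0" and gpos: "\<And>x. x > 0 \<Longrightarrow> g x > 0"
    using assms(1) unfolding in_G_def by auto
  then have gnn: "\<forall>x. g x \<ge> 0"
    by (metis less_imp_le neq0_conv order_refl)
  have decay: "(\<lambda>k. g (y k) * real (y k) powr b) \<longlonglongrightarrow> 0" if "b < a" for b
    using powr_decay_along_seq[OF assms(4) _ assms(7) that] gnn by blast
  show ?thesis
  proof (cases "x = 0")
    case True
    have "real (y k) powr 0 = 1" for k
      using assms(5)[of k] by simp
    then show ?thesis
      using decay[of 0] assms(3) by (simp only: True add_0 g0 mult_1_right)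
  next
    case False
    have "alpha_period g (a / 2) (y k)" for k
      using alpha_period_antimono[OF assms(6)] assms(3) gnn by simp
    moreover have "(\<lambda>k. g (y k) * real (y k) powr (a / 2)) \<longlonglongrightarrow> 0"
      using assms(3) by (intro decay) simp
    ultimately show ?thesis
      using assms(3) gpos False
      by (intro nearly_periodic_tendsto_shift[OF assms(2) _ assms(4), of "a / 2"]) auto
  qed
qed

theorem proposition29:
  fixes g :: "nat \<Rightarrow> real" and f :: "real \<Rightarrow> real"
  assumes "in_G g"
    and "nearly_periodic SS g"
    and "sub_polynomial f"
    and "\<forall>x. g x \<le> f (real x)"
  shows "\<exists>\<alpha>>0. \<exists>y :: nat \<Rightarrow> nat. strict_mono y \<and> (\<forall>k. y k > 0) \<and>
           (\<forall>k. g (y k) \<le> real (y k) powr (-\<alpha>)) \<and>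
           (\<forall>x. (\<lambda>k. g (x + y k)) \<longlonglongrightarrow> g x)"
proof -
  obtain a where a: "a > 0"
    and periods: "\<And>N. \<exists>y\<ge>N. y > 0 \<and> alpha_period g (2 * a) y \<and> g y \<le> real y powr (-a)"
    using decaying_periods[OF assms(2-4)] by blast
  obtain y :: "nat \<Rightarrow> nat" where y: "strict_mono y"
    and yk: "\<And>k. y k > 0 \<and> alpha_period g (2 * a) (y k) \<and> g (y k) \<le> real (y k) powr (-a)"
    by (rule unbounded_imp_strict_mono_enumeration[OF periods]) blast
  show ?thesis
  proof (intro exI conjI allI)
    show "a > 0" and "strict_mono y" using a y .
    show "y k > 0" and "g (y k) \<le> real (y k) powr (-a)" for k
      using yk by auto
    show "(\<lambda>k. g (x + y k)) \<longlonglongrightarrow> g x" for x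
      using in_G_tendsto_shift_along_decaying_periods[OF assms(1,2) a y] yk by blast
  qed
qed

end
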